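(* Let $G$ be a countable infinite discrete group, $X$ an infinite compact Hausdorff space and $\alpha: G\curvearrowright X$ a continuous action with paradoxical comparison. Then $f\oplus f\precsim f$ in $C(X)\rtimes_r G$ for every non-zero $f\in C(X)_+$.
   Context: Subequivalence: for closed $F$ and open $O$ in $X$, $F\prec O$ if there exist a finite open cover $\mathcal{U}$ of $F$ and $s_U\in G$ with the sets $s_UU$ pairwise disjoint subsets of $O$. Paradoxical comparison: for every nonempty open $O$ and closed $F\subset O$ there are disjoint nonempty open $O_1,O_2\subset O$ with $F\prec O_1$ and $F\prec O_2$. Cuntz subequivalence: for positive $a\in M_n(A)$, $b\in M_m(A)$, $a\precsim b$ means there is a sequence $r_k\in M_{m,n}(A)$ with $r_k^\ast b r_k\to a$; $a\oplus b=\mathrm{diag}(a,b)$. *)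

theory Defs
  imports "HOL-Algebra.Group" "HOL-Analysis.Analysis" "HOL-Library.Function_Algebras"
begin

definition group_action :: "('g,'b) monoid_scheme \<Rightarrow> ('g \<Rightarrow> 'x::topological_space \<Rightarrow> 'x) \<Rightarrow> bool" where
  "group_action G \<alpha> \<longleftrightarrow>
     (\<forall>g\<in>carrier G. continuous_on UNIV (\<alpha> g)) \<and>
     (\<forall>x. \<alpha> \<one>\<^bsub>G\<^esub> x = x) \<and>
     (\<forall>g\<in>carrier G. \<forall>h\<in>carrier G. \<forall>x. \<alpha> (g \<otimes>\<^bsub>G\<^esub> h) x = \<alpha> g (\<alpha> h x))"

definition subequiv :: "('g,'b) monoid_scheme \<Rightarrow> ('g \<Rightarrow> 'x::topological_space \<Rightarrow> 'x) \<Rightarrow> 'x set \<Rightarrow> 'x set \<Rightarrow> bool" where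
  "subequiv G \<alpha> F W \<longleftrightarrow>
     (\<exists>UU s. finite UU \<and> (\<forall>U\<in>UU. open U) \<and> F \<subseteq> \<Union>UU \<and>
        (\<forall>U\<in>UU. s U \<in> carrier G \<and> \<alpha> (s U) ` U \<subseteq> W) \<and>
        (\<forall>U\<in>UU. \<forall>V\<in>UU. U \<noteq> V \<longrightarrow> \<alpha> (s U) ` U \<inter> \<alpha> (s V) ` V = {}))"

definition paradoxical_comparison :: "('g,'b) monoid_scheme \<Rightarrow> ('g \<Rightarrow> 'x::topological_space \<Rightarrow> 'x) \<Rightarrow> bool" where
  "paradoxical_comparison G \<alpha> \<longleftrightarrow>
     (\<forall>W F. open W \<and> W \<noteq> {} \<and> closed F \<and> F \<subseteq> W \<longrightarrow>
        (\<exists>O1 O2. open O1 \<and> open O2 \<and> O1 \<noteq> {} \<and> O2 \<noteq> {} \<and> O1 \<subseteq> W \<and> O2 \<subseteq> W \<and>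
           O1 \<inter> O2 = {} \<and> subequiv G \<alpha> F O1 \<and> subequiv G \<alpha> F O2))"

text \<open>Concrete model of the reduced crossed product C(X) \<rtimes>_r G: the regular representation
  induced from the faithful representation of C(X) on l2(X) (counting measure) by multiplication
  operators, acting on l2(G \<times> X).\<close>

definition l2 :: "('g,'b) monoid_scheme \<Rightarrow> ('g \<times> 'x \<Rightarrow> complex) set" where
  "l2 G = {\<xi>. (\<forall>h x. h \<notin> carrier G \<longrightarrow> \<xi> (h, x) = 0) \<and> (\<lambda>p. (cmod (\<xi> p))\<^sup>2) summable_on UNIV}"

definition l2norm :: "('g \<times> 'x \<Rightarrow> complex) \<Rightarrow> real" where
  "l2norm \<xi> = sqrt (infsum (\<lambda>p. (cmod (\<xi> p))\<^sup>2) UNIV)"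

definition l2inner :: "('g \<times> 'x \<Rightarrow> complex) \<Rightarrow> ('g \<times> 'x \<Rightarrow> complex) \<Rightarrow> complex" where
  "l2inner \<xi> \<eta> = infsum (\<lambda>p. \<xi> p * cnj (\<eta> p)) UNIV"

definition mult_op :: "('g,'b) monoid_scheme \<Rightarrow> ('g \<Rightarrow> 'x \<Rightarrow> 'x) \<Rightarrow> ('x \<Rightarrow> complex)
    \<Rightarrow> ('g \<times> 'x \<Rightarrow> complex) \<Rightarrow> ('g \<times> 'x \<Rightarrow> complex)" where
  "mult_op G \<alpha> f \<xi> = (\<lambda>(h, x). if h \<in> carrier G then f (\<alpha> h x) * \<xi> (h, x) else 0)"

definition shift_op :: "('g,'b) monoid_scheme \<Rightarrow> 'g
    \<Rightarrow> ('g \<times> 'x \<Rightarrow> complex) \<Rightarrow> ('g \<times> 'x \<Rightarrow> complex)" where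
  "shift_op G g \<xi> = (\<lambda>(h, x). if h \<in> carrier G then \<xi> (inv\<^bsub>G\<^esub> g \<otimes>\<^bsub>G\<^esub> h, x) else 0)"

definition finite_sum_ops :: "('g,'b) monoid_scheme \<Rightarrow> ('g \<Rightarrow> 'x::topological_space \<Rightarrow> 'x)
    \<Rightarrow> (('g \<times> 'x \<Rightarrow> complex) \<Rightarrow> ('g \<times> 'x \<Rightarrow> complex)) set" where
  "finite_sum_ops G \<alpha> = {T. \<exists>S c. finite S \<and> S \<subseteq> carrier G \<and>
      (\<forall>g\<in>S. continuous_on UNIV (c g)) \<and>
      T = (\<lambda>\<xi>. \<Sum>g\<in>S. mult_op G \<alpha> (c g) (shift_op G g \<xi>))}"

definition op_norm_le :: "('g,'b) monoid_scheme \<Rightarrow> (('g \<times> 'x \<Rightarrow> complex) \<Rightarrow> ('g \<times> 'x \<Rightarrow> complex)) \<Rightarrow> real \<Rightarrow> bool" where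
  "op_norm_le G T e \<longleftrightarrow> (\<forall>\<xi>\<in>l2 G. l2norm \<xi> \<le> 1 \<longrightarrow> l2norm (T \<xi>) \<le> e)"

definition crossed_product :: "('g,'b) monoid_scheme \<Rightarrow> ('g \<Rightarrow> 'x::topological_space \<Rightarrow> 'x)
    \<Rightarrow> (('g \<times> 'x \<Rightarrow> complex) \<Rightarrow> ('g \<times> 'x \<Rightarrow> complex)) set" where
  "crossed_product G \<alpha> = {T. (\<forall>\<xi>\<in>l2 G. T \<xi> \<in> l2 G) \<and>
      (\<forall>\<epsilon>>0. \<exists>S\<in>finite_sum_ops G \<alpha>. op_norm_le G (\<lambda>\<xi>. T \<xi> - S \<xi>) \<epsilon>)}"

definition is_adjoint :: "('g,'b) monoid_scheme \<Rightarrow> (('g \<times> 'x \<Rightarrow> complex) \<Rightarrow> ('g \<times> 'x \<Rightarrow> complex))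
    \<Rightarrow> (('g \<times> 'x \<Rightarrow> complex) \<Rightarrow> ('g \<times> 'x \<Rightarrow> complex)) \<Rightarrow> bool" where
  "is_adjoint G T T' \<longleftrightarrow> (\<forall>\<eta>\<in>l2 G. T' \<eta> \<in> l2 G) \<and>
      (\<forall>\<xi>\<in>l2 G. \<forall>\<eta>\<in>l2 G. l2inner (T \<xi>) \<eta> = l2inner \<xi> (T' \<eta>))"

definition m2_norm_le :: "('g,'b) monoid_scheme
    \<Rightarrow> (('g \<times> 'x \<Rightarrow> complex) \<Rightarrow> ('g \<times> 'x \<Rightarrow> complex)) \<Rightarrow> (('g \<times> 'x \<Rightarrow> complex) \<Rightarrow> ('g \<times> 'x \<Rightarrow> complex))
    \<Rightarrow> (('g \<times> 'x \<Rightarrow> complex) \<Rightarrow> ('g \<times> 'x \<Rightarrow> complex)) \<Rightarrow> (('g \<times> 'x \<Rightarrow> complex) \<Rightarrow> ('g \<times> 'x \<Rightarrow> complex))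
    \<Rightarrow> real \<Rightarrow> bool" where
  "m2_norm_le G a11 a12 a21 a22 e \<longleftrightarrow>
     (\<forall>\<xi>1\<in>l2 G. \<forall>\<xi>2\<in>l2 G. (l2norm \<xi>1)\<^sup>2 + (l2norm \<xi>2)\<^sup>2 \<le> 1 \<longrightarrow>
        sqrt ((l2norm (a11 \<xi>1 + a12 \<xi>2))\<^sup>2 + (l2norm (a21 \<xi>1 + a22 \<xi>2))\<^sup>2) \<le> e)"

text \<open>Cuntz subequivalence a \<oplus> a \<precsim> b for a, b in the crossed product (a \<oplus> a \<in> M_2, b \<in> M_1):
  there are r_k = (r1_k, r2_k) \<in> M_{1,2}(A) with r_k^* b r_k \<rightarrow> diag(a,a) in norm.\<close>
definition cuntz_diag2_below :: "('g,'b) monoid_scheme \<Rightarrow> ('g \<Rightarrow> 'x::topological_space \<Rightarrow> 'x)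
    \<Rightarrow> (('g \<times> 'x \<Rightarrow> complex) \<Rightarrow> ('g \<times> 'x \<Rightarrow> complex)) \<Rightarrow> (('g \<times> 'x \<Rightarrow> complex) \<Rightarrow> ('g \<times> 'x \<Rightarrow> complex)) \<Rightarrow> bool" where
  "cuntz_diag2_below G \<alpha> a b \<longleftrightarrow>
     (\<exists>r1 r2 r1' r2' :: nat \<Rightarrow> (('g \<times> 'x \<Rightarrow> complex) \<Rightarrow> ('g \<times> 'x \<Rightarrow> complex)).
        (\<forall>k. r1 k \<in> crossed_product G \<alpha> \<and> r2 k \<in> crossed_product G \<alpha> \<and>
             is_adjoint G (r1 k) (r1' k) \<and> is_adjoint G (r2 k) (r2' k)) \<and>
        (\<forall>\<epsilon>>0. \<exists>N. \<forall>k\<ge>N. m2_norm_le G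
            (\<lambda>\<xi>. r1' k (b (r1 k \<xi>)) - a \<xi>) (\<lambda>\<xi>. r1' k (b (r2 k \<xi>)))
            (\<lambda>\<xi>. r2' k (b (r1 k \<xi>))) (\<lambda>\<xi>. r2' k (b (r2 k \<xi>)) - a \<xi>) \<epsilon>))"

end

(* Fix e > 0 and put F = {f >= e} and W = {f > e/2}.  Paradoxical comparison gives disjoint
   open O1, O2 inside W into which F is subequivalent.  A subequivalence of F into O (open
   sets U covering F whose translates s_U U are disjoint subsets of O), together with a
   partition of unity phi_U on F, yields r = sum_U u_(s_U) c_U in C(X) x_r G with
   c_U = sqrt (phi_U (f - e)_+ / (f o s_U)).  Disjointness of the translates kills the cross
   terms of r^* f r, leaving sum_U c_U^2 (f o s_U) = (f - e)_+; for the rows r1, r2 coming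
   from O1 and O2 the mixed products r1^* f r2 vanish because O1 and O2 are disjoint.  Hence
   || (r1, r2)^* f (r1, r2) - diag (f, f) || = || (f - e)_+ - f || <= e, and e -> 0 gives
   f + f <~ f. *)

theory Submission
  imports Defs
begin

section \<open>Square-summable functions on G \<times> X\<close>

type_synonym ('g, 'x) l2_op = "('g \<times> 'x \<Rightarrow> complex) \<Rightarrow> 'g \<times> 'x \<Rightarrow> complex"

lemma l2_zero [simp]: "0 \<in> l2 G"
  by (simp add: l2_def)

lemma l2_dominated:
  assumes "\<xi> \<in> l2 G" and "\<And>p. cmod (\<eta> p) \<le> B * cmod (\<xi> p)"
    and "\<And>h x. h \<notin> carrier G \<Longrightarrow> \<eta> (h, x) = 0"
  shows "\<eta> \<in> l2 G"
proof -
  have "(\<lambda>p. B\<^sup>2 * (cmod (\<xi> p))\<^sup>2) summable_on UNIV"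
    using assms(1) by (intro summable_on_cmult_right) (simp add: l2_def)
  moreover have "(cmod (\<eta> p))\<^sup>2 \<le> B\<^sup>2 * (cmod (\<xi> p))\<^sup>2" for p
    using power_mono[OF assms(2), of p 2] by (simp add: power_mult_distrib)
  ultimately have "(\<lambda>p. (cmod (\<eta> p))\<^sup>2) summable_on UNIV"
    by (rule summable_on_comparison_test) auto
  with assms(3) show ?thesis by (simp add: l2_def)
qed

lemma l2_add:
  assumes "\<xi> \<in> l2 G" "\<eta> \<in> l2 G" shows "\<xi> + \<eta> \<in> l2 G"
proof -
  have "(\<lambda>p. 2 * (cmod (\<xi> p))\<^sup>2 + 2 * (cmod (\<eta> p))\<^sup>2) summable_on UNIV"
    using assms by (intro summable_on_add summable_on_cmult_right) (auto simp: l2_def)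
  moreover have "(cmod ((\<xi> + \<eta>) p))\<^sup>2 \<le> 2 * (cmod (\<xi> p))\<^sup>2 + 2 * (cmod (\<eta> p))\<^sup>2" for p
  proof -
    have "(cmod ((\<xi> + \<eta>) p))\<^sup>2 \<le> (cmod (\<xi> p) + cmod (\<eta> p))\<^sup>2"
      by (simp add: norm_triangle_ineq power_mono)
    also have "\<dots> \<le> 2 * (cmod (\<xi> p))\<^sup>2 + 2 * (cmod (\<eta> p))\<^sup>2"
      using sum_squares_bound[of "cmod (\<xi> p)" "cmod (\<eta> p)"] by (simp add: power2_sum)
    finally show ?thesis .
  qed
  ultimately have "(\<lambda>p. (cmod ((\<xi> + \<eta>) p))\<^sup>2) summable_on UNIV"
    by (rule summable_on_comparison_test) auto
  with assms show ?thesis by (auto simp: l2_def)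
qed

lemma l2_sum: "(\<And>i. i \<in> I \<Longrightarrow> F i \<in> l2 G) \<Longrightarrow> (\<Sum>i\<in>I. F i) \<in> l2 G"
  by (induction I rule: infinite_finite_induct) (auto intro: l2_add)

lemma l2norm_nonneg: "0 \<le> l2norm \<xi>"
  by (simp add: l2norm_def infsum_nonneg)

lemma l2inner_summable:
  assumes "\<xi> \<in> l2 G" "\<eta> \<in> l2 G"
  shows "(\<lambda>p. \<xi> p * cnj (\<eta> p)) summable_on UNIV"
proof (rule abs_summable_summable)
  have "(\<lambda>p. (cmod (\<xi> p))\<^sup>2 + (cmod (\<eta> p))\<^sup>2) summable_on UNIV"
    using assms by (intro summable_on_add) (auto simp: l2_def)
  moreover have "norm (\<xi> p * cnj (\<eta> p)) \<le> (cmod (\<xi> p))\<^sup>2 + (cmod (\<eta> p))\<^sup>2" for p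
    using sum_squares_bound[of "cmod (\<xi> p)" "cmod (\<eta> p)"]
      mult_nonneg_nonneg[OF norm_ge_zero norm_ge_zero, of "\<xi> p" "\<eta> p"]
    unfolding norm_mult complex_mod_cnj by linarith
  ultimately show "(\<lambda>p. norm (\<xi> p * cnj (\<eta> p))) summable_on UNIV"
    by (rule summable_on_comparison_test) auto
qed

lemma l2inner_add_left:
  assumes "\<xi> \<in> l2 G" "\<xi>' \<in> l2 G" "\<eta> \<in> l2 G"
  shows "l2inner (\<xi> + \<xi>') \<eta> = l2inner \<xi> \<eta> + l2inner \<xi>' \<eta>"
  unfolding l2inner_def plus_fun_apply distrib_right
  by (rule infsum_add[OF l2inner_summable[OF assms(1,3)] l2inner_summable[OF assms(2,3)]])

lemma l2inner_add_right:
  assumes "\<xi> \<in> l2 G" "\<eta> \<in> l2 G" "\<eta>' \<in> l2 G"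
  shows "l2inner \<xi> (\<eta> + \<eta>') = l2inner \<xi> \<eta> + l2inner \<xi> \<eta>'"
  unfolding l2inner_def plus_fun_apply complex_cnj_add distrib_left
  by (rule infsum_add[OF l2inner_summable[OF assms(1,2)] l2inner_summable[OF assms(1,3)]])

lemma l2inner_sum_left:
  assumes "\<And>i. i \<in> I \<Longrightarrow> F i \<in> l2 G" "\<eta> \<in> l2 G"
  shows "l2inner (\<Sum>i\<in>I. F i) \<eta> = (\<Sum>i\<in>I. l2inner (F i) \<eta>)"
  using assms
proof (induction I rule: infinite_finite_induct)
  case (insert i I)
  have "l2inner (\<Sum>i\<in>insert i I. F i) \<eta> = l2inner (F i + (\<Sum>i\<in>I. F i)) \<eta>"
    by (simp only: sum.insert[OF insert.hyps])
  also have "\<dots> = l2inner (F i) \<eta> + l2inner (\<Sum>i\<in>I. F i) \<eta>"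
    by (rule l2inner_add_left) (use insert.prems in \<open>auto intro: l2_sum\<close>)
  also have "\<dots> = (\<Sum>i\<in>insert i I. l2inner (F i) \<eta>)"
    using insert by simp
  finally show ?case .
qed (simp_all add: l2inner_def)

lemma l2inner_sum_right:
  assumes "\<And>i. i \<in> I \<Longrightarrow> F i \<in> l2 G" "\<xi> \<in> l2 G"
  shows "l2inner \<xi> (\<Sum>i\<in>I. F i) = (\<Sum>i\<in>I. l2inner \<xi> (F i))"
  using assms
proof (induction I rule: infinite_finite_induct)
  case (insert i I)
  have "l2inner \<xi> (\<Sum>i\<in>insert i I. F i) = l2inner \<xi> (F i + (\<Sum>i\<in>I. F i))"
    by (simp only: sum.insert[OF insert.hyps])
  also have "\<dots> = l2inner \<xi> (F i) + l2inner \<xi> (\<Sum>i\<in>I. F i)"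
    by (rule l2inner_add_right) (use insert.prems in \<open>auto intro: l2_sum\<close>)
  also have "\<dots> = (\<Sum>i\<in>insert i I. l2inner \<xi> (F i))"
    using insert by simp
  finally show ?case .
qed (simp_all add: l2inner_def)

lemma is_adjoint_comp:
  assumes "\<forall>\<xi>\<in>l2 G. S \<xi> \<in> l2 G" "is_adjoint G T T'" "is_adjoint G S S'"
  shows "is_adjoint G (\<lambda>\<xi>. T (S \<xi>)) (\<lambda>\<eta>. S' (T' \<eta>))"
  using assms by (simp add: is_adjoint_def)

lemma is_adjoint_sum:
  fixes T T' :: "'i \<Rightarrow> ('g, 'x) l2_op"
  assumes "\<And>i. i \<in> I \<Longrightarrow> \<forall>\<xi>\<in>l2 G. T i \<xi> \<in> l2 G" "\<And>i. i \<in> I \<Longrightarrow> is_adjoint G (T i) (T' i)"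
  shows "is_adjoint G (\<lambda>\<xi>. \<Sum>i\<in>I. T i \<xi>) (\<lambda>\<eta>. \<Sum>i\<in>I. T' i \<eta>)"
  unfolding is_adjoint_def
proof (intro conjI ballI)
  fix \<eta> :: "'g \<times> 'x \<Rightarrow> complex"
  assume "\<eta> \<in> l2 G"
  then show "(\<Sum>i\<in>I. T' i \<eta>) \<in> l2 G"
    using assms by (auto simp: is_adjoint_def intro: l2_sum)
next
  fix \<xi> \<eta> :: "'g \<times> 'x \<Rightarrow> complex"
  assume \<xi>: "\<xi> \<in> l2 G" and \<eta>: "\<eta> \<in> l2 G"
  have "l2inner (\<Sum>i\<in>I. T i \<xi>) \<eta> = (\<Sum>i\<in>I. l2inner (T i \<xi>) \<eta>)"
    by (rule l2inner_sum_left) (use assms \<xi> \<eta> in auto)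
  also have "\<dots> = (\<Sum>i\<in>I. l2inner \<xi> (T' i \<eta>))"
    by (rule sum.cong) (use assms \<xi> \<eta> in \<open>auto simp: is_adjoint_def\<close>)
  also have "\<dots> = l2inner \<xi> (\<Sum>i\<in>I. T' i \<eta>)"
    by (rule l2inner_sum_right[symmetric]) (use assms \<xi> \<eta> in \<open>auto simp: is_adjoint_def\<close>)
  finally show "l2inner (\<Sum>i\<in>I. T i \<xi>) \<eta> = l2inner \<xi> (\<Sum>i\<in>I. T' i \<eta>)" .
qed

section \<open>Multiplication and translation operators\<close>

lemma norm_mult_op_le:
  assumes "\<And>y. cmod (\<phi> y) \<le> B"
  shows "cmod (mult_op G \<alpha> \<phi> \<xi> p) \<le> B * cmod (\<xi> p)"
proof -
  have "0 \<le> B" using norm_ge_zero assms order_trans by blast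
  with assms show ?thesis by (auto simp: mult_op_def norm_mult mult_right_mono split: prod.split)
qed

lemma mult_op_l2:
  assumes "\<xi> \<in> l2 G" "\<And>y. cmod (\<phi> y) \<le> B"
  shows "mult_op G \<alpha> \<phi> \<xi> \<in> l2 G"
proof (rule l2_dominated[OF assms(1)])
  show "cmod (mult_op G \<alpha> \<phi> \<xi> p) \<le> B * cmod (\<xi> p)" for p
    by (rule norm_mult_op_le) (rule assms(2))
qed (simp add: mult_op_def)

lemma l2inner_mult_op:
  "l2inner (mult_op G \<alpha> \<phi> \<xi>) \<eta> = l2inner \<xi> (mult_op G \<alpha> (\<lambda>y. cnj (\<phi> y)) \<eta>)"
  unfolding l2inner_def mult_op_def by (rule infsum_cong) (auto split: prod.split)

lemma is_adjoint_mult_op: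
  assumes "\<And>y. cmod (\<phi> y) \<le> B"
  shows "is_adjoint G (mult_op G \<alpha> \<phi>) (mult_op G \<alpha> (\<lambda>y. cnj (\<phi> y)))"
  using assms by (auto simp: is_adjoint_def l2inner_mult_op intro!: mult_op_l2[where B = B])

lemma l2norm_mult_op_le:
  assumes \<xi>: "\<xi> \<in> l2 G" and \<phi>: "\<And>y. cmod (\<phi> y) \<le> e"
  shows "l2norm (mult_op G \<alpha> \<phi> \<xi>) \<le> e * l2norm \<xi>"
proof -
  have e: "0 \<le> e" using norm_ge_zero \<phi> order_trans by blast
  have summable: "(\<lambda>p. (cmod (\<xi> p))\<^sup>2) summable_on UNIV" using \<xi> by (simp add: l2_def)
  have "(cmod (mult_op G \<alpha> \<phi> \<xi> p))\<^sup>2 \<le> e\<^sup>2 * (cmod (\<xi> p))\<^sup>2" for p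
  proof -
    have "cmod (mult_op G \<alpha> \<phi> \<xi> p) \<le> e * cmod (\<xi> p)"
      by (rule norm_mult_op_le) (rule \<phi>)
    then have "(cmod (mult_op G \<alpha> \<phi> \<xi> p))\<^sup>2 \<le> (e * cmod (\<xi> p))\<^sup>2"
      by (rule power_mono) simp
    then show ?thesis by (simp add: power_mult_distrib)
  qed
  then have "infsum (\<lambda>p. (cmod (mult_op G \<alpha> \<phi> \<xi> p))\<^sup>2) UNIV
             \<le> infsum (\<lambda>p. e\<^sup>2 * (cmod (\<xi> p))\<^sup>2) UNIV"
    using mult_op_l2[OF \<xi> \<phi>] summable by (intro infsum_mono summable_on_cmult_right) (auto simp: l2_def)
  also have "\<dots> = e\<^sup>2 * infsum (\<lambda>p. (cmod (\<xi> p))\<^sup>2) UNIV"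
    using summable by (rule infsum_cmult_right)
  finally have "l2norm (mult_op G \<alpha> \<phi> \<xi>) \<le> sqrt (e\<^sup>2 * infsum (\<lambda>p. (cmod (\<xi> p))\<^sup>2) UNIV)"
    unfolding l2norm_def by (rule real_sqrt_le_mono)
  also have "\<dots> = e * l2norm \<xi>"
    using e by (simp add: l2norm_def real_sqrt_mult)
  finally show ?thesis .
qed

lemma sum_apply: "(\<Sum>i\<in>I. F i) p = (\<Sum>i\<in>I. F i p)"
  by (induction I rule: infinite_finite_induct) auto

lemma mult_op_sum:
  "mult_op G \<alpha> (\<lambda>y. \<Sum>i\<in>I. \<phi> i y) \<xi> = (\<Sum>i\<in>I. mult_op G \<alpha> (\<phi> i) \<xi>)"
  by (auto simp: fun_eq_iff sum_apply mult_op_def sum_distrib_right)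

lemma mult_op_diff:
  "mult_op G \<alpha> \<phi> \<xi> - mult_op G \<alpha> \<psi> \<xi> = mult_op G \<alpha> (\<lambda>y. \<phi> y - \<psi> y) \<xi>"
  by (auto simp: fun_eq_iff mult_op_def left_diff_distrib)

context group
begin

lemma bij_betw_left_translate:
  assumes "g \<in> carrier G"
  shows "bij_betw (\<lambda>(h, x). (g \<otimes> h, x)) (carrier G \<times> UNIV) (carrier G \<times> UNIV)"
  by (rule bij_betw_byWitness[where f' = "\<lambda>(h, x). (inv g \<otimes> h, x)"])
     (use assms in \<open>auto simp: m_assoc [symmetric]\<close>)

lemma summable_on_left_translate:
  assumes g: "g \<in> carrier G" and F: "\<And>h x. h \<notin> carrier G \<Longrightarrow> F (h, x) = 0"
  shows "(\<lambda>(h, x). if h \<in> carrier G then F (g \<otimes> h, x) else 0) summable_on UNIV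
         \<longleftrightarrow> F summable_on UNIV"
proof -
  have "(\<lambda>(h, x). if h \<in> carrier G then F (g \<otimes> h, x) else 0) summable_on UNIV
        \<longleftrightarrow> (\<lambda>p. F ((\<lambda>(h, x). (g \<otimes> h, x)) p)) summable_on carrier G \<times> UNIV"
    by (rule summable_on_cong_neutral) (auto split: if_splits)
  also have "\<dots> \<longleftrightarrow> F summable_on carrier G \<times> UNIV"
    by (rule summable_on_reindex_bij_betw[OF bij_betw_left_translate[OF g]])
  also have "\<dots> \<longleftrightarrow> F summable_on UNIV"
    by (rule summable_on_cong_neutral) (use F in \<open>fastforce\<close>)+
  finally show ?thesis .
qed

lemma infsum_left_translate:
  assumes g: "g \<in> carrier G" and F: "\<And>h x. h \<notin> carrier G \<Longrightarrow> F (h, x) = 0"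
  shows "infsum (\<lambda>(h, x). if h \<in> carrier G then F (g \<otimes> h, x) else 0) UNIV = infsum F UNIV"
proof -
  have "infsum (\<lambda>(h, x). if h \<in> carrier G then F (g \<otimes> h, x) else 0) UNIV
        = infsum (\<lambda>p. F ((\<lambda>(h, x). (g \<otimes> h, x)) p)) (carrier G \<times> UNIV)"
    by (rule infsum_cong_neutral) (auto split: if_splits)
  also have "\<dots> = infsum F (carrier G \<times> UNIV)"
    by (rule infsum_reindex_bij_betw[OF bij_betw_left_translate[OF g]])
  also have "\<dots> = infsum F UNIV"
    by (rule infsum_cong_neutral) (use F in \<open>fastforce\<close>)+
  finally show ?thesis .
qed

lemma shift_op_l2:
  assumes g: "g \<in> carrier G" and \<xi>: "\<xi> \<in> l2 G"
  shows "shift_op G g \<xi> \<in> l2 G"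
proof -
  have "(\<lambda>(h, x). if h \<in> carrier G then (cmod (\<xi> (inv g \<otimes> h, x)))\<^sup>2 else 0) summable_on UNIV"
    using summable_on_left_translate[of "inv g" "\<lambda>p. (cmod (\<xi> p))\<^sup>2"] g \<xi> by (simp add: l2_def)
  moreover have "(\<lambda>p. (cmod (shift_op G g \<xi> p))\<^sup>2)
      = (\<lambda>(h, x). if h \<in> carrier G then (cmod (\<xi> (inv g \<otimes> h, x)))\<^sup>2 else 0)"
    by (auto simp: shift_op_def fun_eq_iff)
  ultimately show ?thesis by (simp add: l2_def shift_op_def)
qed

lemma l2inner_shift_op:
  assumes g: "g \<in> carrier G"
  shows "l2inner (shift_op G g \<xi>) \<eta> = l2inner \<xi> (shift_op G (inv g) \<eta>)"
proof -
  define F where "F = (\<lambda>p. shift_op G g \<xi> p * cnj (\<eta> p))"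
  have "l2inner \<xi> (shift_op G (inv g) \<eta>)
        = infsum (\<lambda>(h, x). if h \<in> carrier G then F (g \<otimes> h, x) else 0) UNIV"
    unfolding l2inner_def F_def shift_op_def
    using g by (intro infsum_cong) (auto simp: m_assoc [symmetric])
  also have "\<dots> = infsum F UNIV"
    by (rule infsum_left_translate[OF g]) (simp add: F_def shift_op_def)
  finally show ?thesis by (simp add: l2inner_def F_def)
qed

lemma is_adjoint_shift_op:
  "g \<in> carrier G \<Longrightarrow> is_adjoint G (shift_op G g) (shift_op G (inv g))"
  by (simp add: is_adjoint_def shift_op_l2 l2inner_shift_op)

end

lemma continuous_on_compact_UNIV_bounded:
  fixes f :: "'x::topological_space \<Rightarrow> 'a::real_normed_vector"
  assumes "compact (UNIV :: 'x set)" "continuous_on UNIV f"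
  obtains B where "\<And>y. norm (f y) \<le> B"
  using compact_imp_bounded[OF compact_continuous_image[OF assms(2,1)]]
  by (auto simp: bounded_iff)

lemma finite_sum_ops_sum:
  assumes "finite I" "\<And>i. i \<in> I \<Longrightarrow> s i \<in> carrier G"
    and "\<And>i. i \<in> I \<Longrightarrow> continuous_on UNIV (\<phi> i)"
  shows "(\<lambda>\<xi>. \<Sum>i\<in>I. mult_op G \<alpha> (\<phi> i) (shift_op G (s i) \<xi>)) \<in> finite_sum_ops G \<alpha>"
proof -
  define \<Phi> where "\<Phi> g = (\<lambda>y. \<Sum>i\<in>{i \<in> I. s i = g}. \<phi> i y)" for g
  have "(\<Sum>i\<in>I. mult_op G \<alpha> (\<phi> i) (shift_op G (s i) \<xi>))
        = (\<Sum>g\<in>s ` I. mult_op G \<alpha> (\<Phi> g) (shift_op G g \<xi>))" for \<xi>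
  proof -
    have "(\<Sum>i\<in>I. mult_op G \<alpha> (\<phi> i) (shift_op G (s i) \<xi>))
        = (\<Sum>g\<in>s ` I. \<Sum>i\<in>{i \<in> I. s i = g}. mult_op G \<alpha> (\<phi> i) (shift_op G (s i) \<xi>))"
      by (rule sum.image_gen[OF assms(1)])
    also have "\<dots> = (\<Sum>g\<in>s ` I. mult_op G \<alpha> (\<Phi> g) (shift_op G g \<xi>))"
      unfolding \<Phi>_def mult_op_sum by (rule sum.cong[OF refl], rule sum.cong) auto
    finally show ?thesis .
  qed
  moreover have "continuous_on UNIV (\<Phi> g)" for g
    unfolding \<Phi>_def using assms(3) by (intro continuous_on_sum) auto
  ultimately show ?thesis
    unfolding finite_sum_ops_def using assms(1,2) by blast
qed

lemma (in group) finite_sum_ops_subset_crossed_product: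
  fixes \<alpha> :: "'a \<Rightarrow> 'x::topological_space \<Rightarrow> 'x"
  assumes K: "compact (UNIV :: 'x set)"
  shows "finite_sum_ops G \<alpha> \<subseteq> crossed_product G \<alpha>"
proof
  fix T assume "T \<in> finite_sum_ops G \<alpha>"
  then obtain S \<phi> where S: "S \<subseteq> carrier G" and \<phi>: "\<And>g. g \<in> S \<Longrightarrow> continuous_on UNIV (\<phi> g)"
    and T: "T = (\<lambda>\<xi>. \<Sum>g\<in>S. mult_op G \<alpha> (\<phi> g) (shift_op G g \<xi>))"
    unfolding finite_sum_ops_def by blast
  have "T \<xi> \<in> l2 G" if \<xi>: "\<xi> \<in> l2 G" for \<xi>
    unfolding T
  proof (rule l2_sum)
    fix g assume g: "g \<in> S"
    obtain B where "\<And>y. cmod (\<phi> g y) \<le> B"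
      using continuous_on_compact_UNIV_bounded[OF K \<phi>[OF g]] by blast
    then show "mult_op G \<alpha> (\<phi> g) (shift_op G g \<xi>) \<in> l2 G"
      using S g \<xi> by (intro mult_op_l2 shift_op_l2) auto
  qed
  moreover have "op_norm_le G (\<lambda>\<xi>. T \<xi> - T \<xi>) \<epsilon>" if "\<epsilon> > 0" for \<epsilon>
    using that by (simp add: op_norm_le_def l2norm_def)
  ultimately show "T \<in> crossed_product G \<alpha>"
    unfolding crossed_product_def using \<open>T \<in> finite_sum_ops G \<alpha>\<close> by blast
qed

section \<open>Transport operators of a subequivalence\<close>

(* In the crossed product, shift_op G g is the unitary u_g and mult_op G alpha c the function c,
   so transport_op G alpha I s c is sum_i u_(s i) c_i and transport_adj its adjoint
   sum_i c_i u_(s i)^*. *)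
definition transport_op :: "('g, 'b) monoid_scheme \<Rightarrow> ('g \<Rightarrow> 'x \<Rightarrow> 'x) \<Rightarrow> 'i set \<Rightarrow> ('i \<Rightarrow> 'g)
    \<Rightarrow> ('i \<Rightarrow> 'x \<Rightarrow> real) \<Rightarrow> ('g, 'x) l2_op" where
  "transport_op G \<alpha> I s c \<xi> =
     (\<Sum>i\<in>I. shift_op G (s i) (mult_op G \<alpha> (\<lambda>y. complex_of_real (c i y)) \<xi>))"

definition transport_adj :: "('g, 'b) monoid_scheme \<Rightarrow> ('g \<Rightarrow> 'x \<Rightarrow> 'x) \<Rightarrow> 'i set \<Rightarrow> ('i \<Rightarrow> 'g)
    \<Rightarrow> ('i \<Rightarrow> 'x \<Rightarrow> real) \<Rightarrow> ('g, 'x) l2_op" where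
  "transport_adj G \<alpha> I s c \<eta> =
     (\<Sum>i\<in>I. mult_op G \<alpha> (\<lambda>y. complex_of_real (c i y)) (shift_op G (inv\<^bsub>G\<^esub> (s i)) \<eta>))"

locale continuous_group_action = group +
  fixes \<alpha> :: "'a \<Rightarrow> 'x::topological_space \<Rightarrow> 'x"
  assumes action: "group_action G \<alpha>"
begin

lemma action_mult: "g \<in> carrier G \<Longrightarrow> h \<in> carrier G \<Longrightarrow> \<alpha> (g \<otimes> h) x = \<alpha> g (\<alpha> h x)"
  using action by (simp add: group_action_def)

lemma action_one [simp]: "\<alpha> \<one> x = x"
  using action by (simp add: group_action_def)

lemma continuous_on_action: "g \<in> carrier G \<Longrightarrow> continuous_on UNIV (\<alpha> g)"
  using action by (simp add: group_action_def)

lemma action_inv_left [simp]: "g \<in> carrier G \<Longrightarrow> \<alpha> (inv g) (\<alpha> g x) = x"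
  by (simp flip: action_mult)

lemma action_inv_right [simp]: "g \<in> carrier G \<Longrightarrow> \<alpha> g (\<alpha> (inv g) x) = x"
  by (simp flip: action_mult)

lemma shift_op_mult_op:
  assumes "g \<in> carrier G"
  shows "shift_op G g (mult_op G \<alpha> \<phi> \<xi>) = mult_op G \<alpha> (\<lambda>y. \<phi> (\<alpha> (inv g) y)) (shift_op G g \<xi>)"
  using assms by (auto simp: fun_eq_iff shift_op_def mult_op_def action_mult)

context
  fixes I :: "'i set" and s :: "'i \<Rightarrow> 'a" and c :: "'i \<Rightarrow> 'x \<Rightarrow> real"
  assumes s: "\<And>i. i \<in> I \<Longrightarrow> s i \<in> carrier G"
begin

lemma is_adjoint_transport:
  assumes K: "compact (UNIV :: 'x set)" and c: "\<And>i. i \<in> I \<Longrightarrow> continuous_on UNIV (c i)"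
  shows "is_adjoint G (transport_op G \<alpha> I s c) (transport_adj G \<alpha> I s c)"
  unfolding transport_op_def transport_adj_def
proof (rule is_adjoint_sum)
  fix i assume i: "i \<in> I"
  obtain B where "\<And>y. norm (c i y) \<le> B"
    using continuous_on_compact_UNIV_bounded[OF K c[OF i]] by blast
  then have B: "cmod (complex_of_real (c i y)) \<le> B" for y by simp
  show "\<forall>\<xi>\<in>l2 G. shift_op G (s i) (mult_op G \<alpha> (\<lambda>y. complex_of_real (c i y)) \<xi>) \<in> l2 G"
    using s[OF i] by (auto intro!: shift_op_l2 mult_op_l2[OF _ B])
  have adj: "is_adjoint G (mult_op G \<alpha> (\<lambda>y. complex_of_real (c i y)))
                          (mult_op G \<alpha> (\<lambda>y. complex_of_real (c i y)))"
    using is_adjoint_mult_op[OF B, of G \<alpha>] by simp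
  show "is_adjoint G (\<lambda>\<xi>. shift_op G (s i) (mult_op G \<alpha> (\<lambda>y. complex_of_real (c i y)) \<xi>))
          (\<lambda>\<eta>. mult_op G \<alpha> (\<lambda>y. complex_of_real (c i y)) (shift_op G (inv (s i)) \<eta>))"
    by (rule is_adjoint_comp[OF _ is_adjoint_shift_op[OF s[OF i]] adj]) (use mult_op_l2[OF _ B] in auto)
qed

lemma transport_op_in_crossed_product:
  assumes K: "compact (UNIV :: 'x set)" and c: "\<And>i. i \<in> I \<Longrightarrow> continuous_on UNIV (c i)"
    and fin: "finite I"
  shows "transport_op G \<alpha> I s c \<in> crossed_product G \<alpha>"
proof -
  have "transport_op G \<alpha> I s c = (\<lambda>\<xi>. \<Sum>i\<in>I. mult_op G \<alpha> (\<lambda>y. complex_of_real (c i (\<alpha> (inv (s i)) y)))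
                                                    (shift_op G (s i) \<xi>))"
    unfolding transport_op_def by (intro ext sum.cong refl) (simp add: shift_op_mult_op s)
  also have "\<dots> \<in> finite_sum_ops G \<alpha>"
  proof (rule finite_sum_ops_sum[OF fin s])
    fix i assume i: "i \<in> I"
    show "continuous_on UNIV (\<lambda>y. complex_of_real (c i (\<alpha> (inv (s i)) y)))"
      using continuous_on_compose2[OF c[OF i] continuous_on_action[OF inv_closed[OF s[OF i]]]]
      by (intro continuous_on_of_real) simp
  qed
  finally show ?thesis using finite_sum_ops_subset_crossed_product[OF K] by blast
qed

lemma transport_op_apply:
  "h \<in> carrier G \<Longrightarrow> transport_op G \<alpha> I s c \<xi> (h, x)
     = (\<Sum>i\<in>I. complex_of_real (c i (\<alpha> (inv (s i)) (\<alpha> h x))) * \<xi> (inv (s i) \<otimes> h, x))"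
  unfolding transport_op_def sum_apply
  by (intro sum.cong refl) (simp add: shift_op_def mult_op_def action_mult s)

lemma transport_adj_apply:
  "h \<in> carrier G \<Longrightarrow> transport_adj G \<alpha> I s c \<eta> (h, x)
     = (\<Sum>i\<in>I. complex_of_real (c i (\<alpha> h x)) * \<eta> (s i \<otimes> h, x))"
  unfolding transport_adj_def sum_apply
  by (intro sum.cong refl) (simp add: shift_op_def mult_op_def s)

end

lemma transport_adj_outside: "h \<notin> carrier G \<Longrightarrow> transport_adj G \<alpha> I s c \<eta> (h, x) = 0"
  by (simp add: transport_adj_def sum_apply mult_op_def)

lemma compression_apply:
  assumes h: "h \<in> carrier G"
    and s: "\<And>i. i \<in> I \<Longrightarrow> s i \<in> carrier G" and t: "\<And>j. j \<in> J \<Longrightarrow> t j \<in> carrier G"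
  shows "transport_adj G \<alpha> I s c (mult_op G \<alpha> (\<lambda>y. complex_of_real (f y)) (transport_op G \<alpha> J t d \<xi>)) (h, x)
    = (\<Sum>i\<in>I. \<Sum>j\<in>J. complex_of_real (c i (\<alpha> h x) * f (\<alpha> (s i) (\<alpha> h x))
                                         * d j (\<alpha> (inv (t j)) (\<alpha> (s i) (\<alpha> h x))))
                      * \<xi> (inv (t j) \<otimes> (s i \<otimes> h), x))" (is "?L = ?R")
proof -
  have "?L = (\<Sum>i\<in>I. complex_of_real (c i (\<alpha> h x))
          * mult_op G \<alpha> (\<lambda>y. complex_of_real (f y)) (transport_op G \<alpha> J t d \<xi>) (s i \<otimes> h, x))"
    by (rule transport_adj_apply[OF s h])
  also have "\<dots> = ?R"
    using s h by (intro sum.cong refl)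
      (simp add: mult_op_def transport_op_apply[OF t] action_mult sum_distrib_left mult.assoc)
  finally show ?thesis .
qed

lemma compression_orthogonal:
  assumes s: "\<And>i. i \<in> I \<Longrightarrow> s i \<in> carrier G" and t: "\<And>j. j \<in> J \<Longrightarrow> t j \<in> carrier G"
    and c_A: "\<And>i z. i \<in> I \<Longrightarrow> c i z \<noteq> 0 \<Longrightarrow> \<alpha> (s i) z \<in> A"
    and d_B: "\<And>j z. j \<in> J \<Longrightarrow> d j z \<noteq> 0 \<Longrightarrow> \<alpha> (t j) z \<in> B" and AB: "A \<inter> B = {}"
  shows "transport_adj G \<alpha> I s c (mult_op G \<alpha> (\<lambda>y. complex_of_real (f y)) (transport_op G \<alpha> J t d \<xi>)) = 0"
    (is "?L = _")
proof (intro ext, clarify)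
  fix h x
  show "?L (h, x) = 0 (h, x)"
  proof (cases "h \<in> carrier G")
    case True
    have "c i z * f (\<alpha> (s i) z) * d j (\<alpha> (inv (t j)) (\<alpha> (s i) z)) = 0" if "i \<in> I" "j \<in> J" for i j z
      using c_A[OF that(1), of z] d_B[OF that(2), of "\<alpha> (inv (t j)) (\<alpha> (s i) z)"] t[OF that(2)] AB
      by auto
    then show ?thesis
      by (subst compression_apply[OF True s t]) (auto intro!: sum.neutral)
  qed (simp add: transport_adj_outside)
qed

lemma compression_disjoint:
  assumes fin: "finite I" and s: "\<And>i. i \<in> I \<Longrightarrow> s i \<in> carrier G"
    and disj: "\<And>i j z w. i \<in> I \<Longrightarrow> j \<in> I \<Longrightarrow> c i z \<noteq> 0 \<Longrightarrow> c j w \<noteq> 0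
                         \<Longrightarrow> \<alpha> (s i) z = \<alpha> (s j) w \<Longrightarrow> i = j"
  shows "transport_adj G \<alpha> I s c (mult_op G \<alpha> (\<lambda>y. complex_of_real (f y)) (transport_op G \<alpha> I s c \<xi>))
         = mult_op G \<alpha> (\<lambda>y. complex_of_real (\<Sum>i\<in>I. (c i y)\<^sup>2 * f (\<alpha> (s i) y))) \<xi>"
    (is "?L = ?R")
proof (intro ext, clarify)
  fix h x
  show "?L (h, x) = ?R (h, x)"
  proof (cases "h \<in> carrier G")
    case h: True
    let ?z = "\<alpha> h x"
    let ?T = "\<lambda>i j. complex_of_real (c i ?z * f (\<alpha> (s i) ?z) * c j (\<alpha> (inv (s j)) (\<alpha> (s i) ?z)))
                     * \<xi> (inv (s j) \<otimes> (s i \<otimes> h), x)"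
    have diagonal: "(\<Sum>j\<in>I. ?T i j) = complex_of_real ((c i ?z)\<^sup>2 * f (\<alpha> (s i) ?z)) * \<xi> (h, x)"
      if i: "i \<in> I" for i
    proof -
      have "?T i j = 0" if "j \<in> I - {i}" for j
        using disj[OF i, of j ?z "\<alpha> (inv (s j)) (\<alpha> (s i) ?z)"] s that by auto
      then have "(\<Sum>j\<in>I. ?T i j) = ?T i i"
        using sum.remove[OF fin i, of "?T i"] by (simp add: sum.neutral)
      also have "\<dots> = complex_of_real ((c i ?z)\<^sup>2 * f (\<alpha> (s i) ?z)) * \<xi> (h, x)"
        using s[OF i] h by (simp add: m_assoc [symmetric] power2_eq_square mult_ac)
      finally show ?thesis .
    qed
    have "?L (h, x) = (\<Sum>i\<in>I. \<Sum>j\<in>I. ?T i j)"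
      by (rule compression_apply[OF h s s])
    also have "\<dots> = (\<Sum>i\<in>I. complex_of_real ((c i ?z)\<^sup>2 * f (\<alpha> (s i) ?z)) * \<xi> (h, x))"
      by (rule sum.cong[OF refl]) (rule diagonal)
    also have "\<dots> = ?R (h, x)"
      using h by (simp add: mult_op_def sum_distrib_right)
    finally show ?thesis .
  qed (simp add: transport_adj_outside mult_op_def)
qed

end

section \<open>Partitions of unity on compact Hausdorff spaces\<close>

lemma compact_imp_normal_space:
  assumes "compact (UNIV :: 'x::t2_space set)"
  shows "normal_space (euclidean :: 'x topology)"
proof -
  have "compact_space (euclidean :: 'x topology)"
    using assms by (simp add: compact_space_def)
  moreover have "Hausdorff_space (euclidean :: 'x topology)"
    unfolding Hausdorff_space_def disjnt_def open_openin [symmetric] using hausdorff by blast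
  ultimately show ?thesis
    using compact_Hausdorff_or_regular_imp_normal_space by blast
qed

lemma Urysohn_bump:
  fixes y :: "'x::t2_space"
  assumes K: "compact (UNIV :: 'x set)" and U: "open U" "y \<in> U"
  obtains \<psi> :: "'x \<Rightarrow> real"
  where "continuous_on UNIV \<psi>" "\<psi> y = 1" "\<And>z. 0 \<le> \<psi> z" "\<And>z. z \<notin> U \<Longrightarrow> \<psi> z = 0"
proof -
  have "closedin euclidean {y}" "closedin euclidean (- U)" "disjnt {y} (- U)"
    using U by (auto simp: closed_closedin [symmetric] disjnt_def)
  then obtain f :: "'x \<Rightarrow> real" where
    f: "continuous_map euclidean euclideanreal f" "f ` {y} \<subseteq> {1}" "f ` (- U) \<subseteq> {0}"
    using Urysohn_lemma_alt[OF compact_imp_normal_space[OF K]] by metis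
  show ?thesis
  proof
    show "continuous_on UNIV (\<lambda>z. max 0 (f z))"
      using f(1) by (intro continuous_on_max continuous_on_const) simp
  qed (use f(2,3) in auto)
qed

lemma finite_bump_cover:
  fixes F :: "'x::t2_space set"
  assumes K: "compact (UNIV :: 'x set)" and F: "closed F"
    and UU: "\<forall>U\<in>UU. open U" and cover: "F \<subseteq> \<Union>UU"
  obtains Z :: "'x set" and V :: "'x \<Rightarrow> 'x set" and \<psi> :: "'x \<Rightarrow> 'x \<Rightarrow> real"
  where "finite Z" "\<And>y. y \<in> Z \<Longrightarrow> V y \<in> UU" "\<And>y. y \<in> Z \<Longrightarrow> continuous_on UNIV (\<psi> y)"
    and "\<And>y z. y \<in> Z \<Longrightarrow> 0 \<le> \<psi> y z" "\<And>y z. y \<in> Z \<Longrightarrow> z \<notin> V y \<Longrightarrow> \<psi> y z = 0"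
    and "F \<subseteq> (\<Union>y\<in>Z. {z. 1/2 < \<psi> y z})"
proof -
  have bumps: "\<forall>y\<in>F. \<exists>U \<psi>. U \<in> UU \<and> continuous_on UNIV \<psi> \<and> \<psi> y = (1::real) \<and> (\<forall>z. 0 \<le> \<psi> z)
                  \<and> (\<forall>z. z \<notin> U \<longrightarrow> \<psi> z = 0)"
  proof
    fix y assume "y \<in> F"
    then obtain U where "U \<in> UU" "y \<in> U" using cover by blast
    with Urysohn_bump[OF K UU[rule_format]] show "\<exists>U \<psi>. U \<in> UU \<and> continuous_on UNIV \<psi> \<and> \<psi> y = (1::real)
        \<and> (\<forall>z. 0 \<le> \<psi> z) \<and> (\<forall>z. z \<notin> U \<longrightarrow> \<psi> z = 0)" by metis
  qed
  obtain V where "\<forall>y\<in>F. \<exists>\<psi>. V y \<in> UU \<and> continuous_on UNIV \<psi> \<and> \<psi> y = (1::real)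
                  \<and> (\<forall>z. 0 \<le> \<psi> z) \<and> (\<forall>z. z \<notin> V y \<longrightarrow> \<psi> z = 0)"
    using bchoice[OF bumps] by blast
  from bchoice[OF this] obtain \<psi> :: "'x \<Rightarrow> 'x \<Rightarrow> real" where "\<forall>y\<in>F. V y \<in> UU \<and> continuous_on UNIV (\<psi> y) \<and> \<psi> y y = 1
                  \<and> (\<forall>z. 0 \<le> \<psi> y z) \<and> (\<forall>z. z \<notin> V y \<longrightarrow> \<psi> y z = 0)" ..
  then have V: "\<And>y. y \<in> F \<Longrightarrow> V y \<in> UU"
    and \<psi>: "\<And>y. y \<in> F \<Longrightarrow> continuous_on UNIV (\<psi> y)" "\<And>y. y \<in> F \<Longrightarrow> \<psi> y y = 1"
      "\<And>y z. y \<in> F \<Longrightarrow> 0 \<le> \<psi> y z" "\<And>y z. y \<in> F \<Longrightarrow> z \<notin> V y \<Longrightarrow> \<psi> y z = 0"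
    by blast+
  have "compact F" using compact_Int_closed[OF K F] by simp
  moreover have "\<And>y. y \<in> F \<Longrightarrow> open {z. 1/2 < \<psi> y z}"
    using \<psi>(1) by (intro open_Collect_less continuous_on_const) auto
  moreover have "F \<subseteq> (\<Union>y\<in>F. {z. 1/2 < \<psi> y z})"
  proof
    fix y assume "y \<in> F"
    with \<psi>(2) show "y \<in> (\<Union>y\<in>F. {z. 1/2 < \<psi> y z})" by force
  qed
  ultimately obtain Z where "Z \<subseteq> F" "finite Z" "F \<subseteq> (\<Union>y\<in>Z. {z. 1/2 < \<psi> y z})"
    by (elim compactE_image)
  then show ?thesis
    using V \<psi>(1,3,4) by (intro that[of Z V \<psi>]) auto
qed

lemma partition_of_unity_compact:
  fixes F :: "'x::t2_space set"
  assumes K: "compact (UNIV :: 'x set)" and F: "closed F" and fin: "finite UU"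
    and UU: "\<forall>U\<in>UU. open U" and cover: "F \<subseteq> \<Union>UU"
  obtains \<phi> :: "'x set \<Rightarrow> 'x \<Rightarrow> real"
  where "\<And>U. U \<in> UU \<Longrightarrow> continuous_on UNIV (\<phi> U)" "\<And>U y. 0 \<le> \<phi> U y"
    and "\<And>U y. U \<in> UU \<Longrightarrow> \<phi> U y \<noteq> 0 \<Longrightarrow> y \<in> U" and "\<And>y. y \<in> F \<Longrightarrow> (\<Sum>U\<in>UU. \<phi> U y) = 1"
proof -
  obtain Z :: "'x set" and V :: "'x \<Rightarrow> 'x set" and \<psi> :: "'x \<Rightarrow> 'x \<Rightarrow> real"
    where Z: "finite Z" and V: "\<And>y. y \<in> Z \<Longrightarrow> V y \<in> UU"
      and \<psi>: "\<And>y. y \<in> Z \<Longrightarrow> continuous_on UNIV (\<psi> y)" "\<And>y z. y \<in> Z \<Longrightarrow> 0 \<le> \<psi> y z"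
        "\<And>y z. y \<in> Z \<Longrightarrow> z \<notin> V y \<Longrightarrow> \<psi> y z = 0"
      and Z_cover: "F \<subseteq> (\<Union>y\<in>Z. {z. 1/2 < \<psi> y z})"
    by (rule finite_bump_cover[OF K F UU cover]) (rule that)
  define S where "S z = (\<Sum>y\<in>Z. \<psi> y z)" for z
  define \<phi> where "\<phi> U z = (\<Sum>y\<in>{y \<in> Z. V y = U}. \<psi> y z) / max (S z) (1/2)" for U z
  show ?thesis
  proof
    fix U assume "U \<in> UU"
    show "continuous_on UNIV (\<phi> U)"
      unfolding \<phi>_def S_def using \<psi>(1)
      by (intro continuous_on_divide continuous_on_sum continuous_on_max continuous_on_const) auto
  next
    show "0 \<le> \<phi> U y" for U y
      unfolding \<phi>_def using \<psi>(2) by (intro divide_nonneg_nonneg sum_nonneg) auto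
  next
    fix U y assume "U \<in> UU" "\<phi> U y \<noteq> 0"
    then have "(\<Sum>w\<in>{w \<in> Z. V w = U}. \<psi> w y) \<noteq> 0" by (auto simp: \<phi>_def)
    then obtain w where "w \<in> {w \<in> Z. V w = U}" "\<psi> w y \<noteq> 0" by (meson sum.neutral)
    then show "y \<in> U" using \<psi>(3) by blast
  next
    fix y assume "y \<in> F"
    then obtain w where "w \<in> Z" "1/2 < \<psi> w y" using Z_cover by blast
    moreover have "\<psi> w y \<le> S y"
      unfolding S_def using \<open>w \<in> Z\<close> Z \<psi>(2) by (intro member_le_sum) auto
    ultimately have "1/2 < S y" by linarith
    moreover have "(\<Sum>U\<in>UU. \<Sum>y'\<in>{y' \<in> Z. V y' = U}. \<psi> y' y) = S y"
      unfolding S_def using Z V fin by (intro sum.group) auto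
    ultimately show "(\<Sum>U\<in>UU. \<phi> U y) = 1"
      unfolding \<phi>_def by (simp add: sum_divide_distrib [symmetric])
  qed
qed

section \<open>Cuntz comparison\<close>

lemma m2_norm_le_diagonal:
  fixes D :: "('g, 'x) l2_op"
  assumes "\<And>\<xi>1 \<xi>2. a11 \<xi>1 + a12 \<xi>2 = D \<xi>1" "\<And>\<xi>1 \<xi>2. a21 \<xi>1 + a22 \<xi>2 = D \<xi>2"
    and D: "\<And>\<xi>. \<xi> \<in> l2 G \<Longrightarrow> l2norm (D \<xi>) \<le> e * l2norm \<xi>" and e: "0 \<le> e"
  shows "m2_norm_le G a11 a12 a21 a22 e"
  unfolding m2_norm_le_def assms(1,2)
proof (intro ballI impI)
  fix \<xi>1 \<xi>2 :: "'g \<times> 'x \<Rightarrow> complex"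
  assume \<xi>: "\<xi>1 \<in> l2 G" "\<xi>2 \<in> l2 G" and n: "(l2norm \<xi>1)\<^sup>2 + (l2norm \<xi>2)\<^sup>2 \<le> 1"
  have "(l2norm (D \<xi>))\<^sup>2 \<le> e\<^sup>2 * (l2norm \<xi>)\<^sup>2" if "\<xi> \<in> l2 G" for \<xi>
    using power_mono[OF D[OF that] l2norm_nonneg, of 2] by (simp add: power_mult_distrib)
  then have "(l2norm (D \<xi>1))\<^sup>2 + (l2norm (D \<xi>2))\<^sup>2 \<le> e\<^sup>2 * ((l2norm \<xi>1)\<^sup>2 + (l2norm \<xi>2)\<^sup>2)"
    using \<xi> by (simp only: distrib_left add_mono)
  also have "\<dots> \<le> e\<^sup>2" using n by (intro mult_left_le) simp_all
  finally show "sqrt ((l2norm (D \<xi>1))\<^sup>2 + (l2norm (D \<xi>2))\<^sup>2) \<le> e"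
    using e by (rule real_le_lsqrt[rotated])
qed

definition cuntz_diag2_witness :: "('g, 'b) monoid_scheme \<Rightarrow> ('g \<Rightarrow> 'x::topological_space \<Rightarrow> 'x)
    \<Rightarrow> ('g, 'x) l2_op \<Rightarrow> ('g, 'x) l2_op \<Rightarrow> real
    \<Rightarrow> ('g, 'x) l2_op \<Rightarrow> ('g, 'x) l2_op \<Rightarrow> ('g, 'x) l2_op \<Rightarrow> ('g, 'x) l2_op \<Rightarrow> bool" where
  "cuntz_diag2_witness G \<alpha> a b \<epsilon> r1 r2 r1' r2' \<longleftrightarrow>
     r1 \<in> crossed_product G \<alpha> \<and> r2 \<in> crossed_product G \<alpha> \<and> is_adjoint G r1 r1' \<and> is_adjoint G r2 r2' \<and>
     m2_norm_le G (\<lambda>\<xi>. r1' (b (r1 \<xi>)) - a \<xi>) (\<lambda>\<xi>. r1' (b (r2 \<xi>)))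
                  (\<lambda>\<xi>. r2' (b (r1 \<xi>))) (\<lambda>\<xi>. r2' (b (r2 \<xi>)) - a \<xi>) \<epsilon>"

lemma cuntz_diag2_belowI:
  assumes \<delta>: "0 < \<delta>"
    and approx: "\<And>\<epsilon>. 0 < \<epsilon> \<Longrightarrow> \<epsilon> \<le> \<delta> \<Longrightarrow> \<exists>r1 r2 r1' r2'. cuntz_diag2_witness G \<alpha> a b \<epsilon> r1 r2 r1' r2'"
  shows "cuntz_diag2_below G \<alpha> a b"
proof -
  have "\<forall>k::nat. \<exists>r1 r2 r1' r2'. cuntz_diag2_witness G \<alpha> a b (\<delta> / (real k + 1)) r1 r2 r1' r2'"
    using \<delta> by (intro allI approx) (simp_all add: field_simps)
  then obtain r1 r2 r1' r2'
    where r: "\<And>k. cuntz_diag2_witness G \<alpha> a b (\<delta> / (real k + 1)) (r1 k) (r2 k) (r1' k) (r2' k)"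
    by metis
  have "\<exists>N. \<forall>k\<ge>N. m2_norm_le G (\<lambda>\<xi>. r1' k (b (r1 k \<xi>)) - a \<xi>) (\<lambda>\<xi>. r1' k (b (r2 k \<xi>)))
                 (\<lambda>\<xi>. r2' k (b (r1 k \<xi>))) (\<lambda>\<xi>. r2' k (b (r2 k \<xi>)) - a \<xi>) \<epsilon>" if "0 < \<epsilon>" for \<epsilon>
  proof -
    obtain N :: nat where N: "\<delta> / \<epsilon> < N" using reals_Archimedean2 by blast
    have "\<delta> / (real k + 1) \<le> \<epsilon>" if "N \<le> k" for k
    proof -
      have "\<delta> < \<epsilon> * (k + 1)"
        using N that \<open>0 < \<epsilon>\<close> mult_left_mono[of "real N" "k + 1" \<epsilon>] by (simp add: field_simps)
      then show ?thesis using \<delta> by (simp add: field_simps)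
    qed
    then show ?thesis
      using r unfolding cuntz_diag2_witness_def m2_norm_le_def by (meson order_trans)
  qed
  with r show ?thesis
    unfolding cuntz_diag2_below_def cuntz_diag2_witness_def by blast
qed

locale compact_group_action = continuous_group_action G \<alpha>
  for G (structure) and \<alpha> :: "'a \<Rightarrow> 'x::t2_space \<Rightarrow> 'x" +
  assumes compact_UNIV: "compact (UNIV :: 'x set)"
begin

lemma cover_weights:
  fixes f :: "'x \<Rightarrow> real"
  assumes f: "continuous_on UNIV f" and e: "0 < e" and fin: "finite UU" and UU: "\<forall>U\<in>UU. open U"
    and cover: "{y. e \<le> f y} \<subseteq> \<Union>UU" and s: "\<forall>U\<in>UU. s U \<in> carrier G"
    and large: "\<forall>U\<in>UU. \<forall>z\<in>U. e / 2 < f (\<alpha> (s U) z)"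
  obtains c where "\<And>U. U \<in> UU \<Longrightarrow> continuous_on UNIV (c U)"
    and "\<And>U z. U \<in> UU \<Longrightarrow> c U z \<noteq> 0 \<Longrightarrow> z \<in> U"
    and "\<And>z. (\<Sum>U\<in>UU. (c U z)\<^sup>2 * f (\<alpha> (s U) z)) = max (f z - e) 0"
proof -
  have "closed {y. e \<le> f y}"
    using f by (intro closed_Collect_le continuous_on_const)
  then obtain \<phi> :: "'x set \<Rightarrow> 'x \<Rightarrow> real"
    where \<phi>: "\<And>U. U \<in> UU \<Longrightarrow> continuous_on UNIV (\<phi> U)" "\<And>U y. 0 \<le> \<phi> U y"
      "\<And>U y. U \<in> UU \<Longrightarrow> \<phi> U y \<noteq> 0 \<Longrightarrow> y \<in> U" "\<And>y. y \<in> {y. e \<le> f y} \<Longrightarrow> (\<Sum>U\<in>UU. \<phi> U y) = 1"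
    by (rule partition_of_unity_compact[OF compact_UNIV _ fin UU cover]) (rule that)
  \<comment> \<open>On the support of \<open>\<phi> U\<close> the denominator is \<open>f (\<alpha> (s U) z)\<close>; the bound \<open>e / 2\<close> only
      keeps \<open>c U\<close> continuous elsewhere.\<close>
  define c where "c U z = sqrt (\<phi> U z * max (f z - e) 0 / max (f (\<alpha> (s U) z)) (e / 2))" for U z
  show ?thesis
  proof
    fix U assume U: "U \<in> UU"
    have "continuous_on UNIV (\<lambda>z. f (\<alpha> (s U) z))"
      using continuous_on_compose2[OF f continuous_on_action] s U by simp
    moreover have "\<forall>z\<in>UNIV. max (f (\<alpha> (s U) z)) (e / 2) \<noteq> 0"
      using e by (simp add: max_def)
    ultimately show "continuous_on UNIV (c U)"
      unfolding c_def using \<phi>(1)[OF U] f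
      by (intro continuous_on_real_sqrt continuous_on_divide continuous_on_mult continuous_on_max
          continuous_on_diff continuous_on_const)
  next
    fix U z assume U: "U \<in> UU" and "c U z \<noteq> 0"
    then have "\<phi> U z \<noteq> 0" by (auto simp: c_def)
    then show "z \<in> U" using \<phi>(3)[OF U] by blast
  next
    fix z
    have "(c U z)\<^sup>2 * f (\<alpha> (s U) z) = \<phi> U z * max (f z - e) 0" if U: "U \<in> UU" for U
    proof (cases "\<phi> U z = 0")
      case False
      then have pos: "e / 2 < f (\<alpha> (s U) z)" using \<phi>(3)[OF U] large U by blast
      moreover have "0 < f (\<alpha> (s U) z)" using pos e by linarith
      ultimately have "(c U z)\<^sup>2 = \<phi> U z * max (f z - e) 0 / f (\<alpha> (s U) z)"
        unfolding c_def using \<phi>(2)[of U z] by (simp add: max_absorb1)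
      then show ?thesis using pos e by simp
    qed (simp add: c_def)
    then have "(\<Sum>U\<in>UU. (c U z)\<^sup>2 * f (\<alpha> (s U) z)) = (\<Sum>U\<in>UU. \<phi> U z) * max (f z - e) 0"
      by (simp add: sum_distrib_right)
    also have "\<dots> = max (f z - e) 0" using \<phi>(4)[of z] by (cases "e \<le> f z") auto
    finally show "(\<Sum>U\<in>UU. (c U z)\<^sup>2 * f (\<alpha> (s U) z)) = max (f z - e) 0" .
  qed
qed

lemma subequiv_weights:
  fixes f :: "'x \<Rightarrow> real"
  assumes f: "continuous_on UNIV f" and e: "0 < e"
    and sub: "subequiv G \<alpha> {y. e \<le> f y} W" and W: "W \<subseteq> {y. e / 2 < f y}"
  obtains I :: "'x set set" and s c
  where "finite I" "\<And>i. i \<in> I \<Longrightarrow> s i \<in> carrier G" "\<And>i. i \<in> I \<Longrightarrow> continuous_on UNIV (c i)"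
    and "\<And>i z. i \<in> I \<Longrightarrow> c i z \<noteq> 0 \<Longrightarrow> \<alpha> (s i) z \<in> W"
    and "\<And>i j z w. i \<in> I \<Longrightarrow> j \<in> I \<Longrightarrow> c i z \<noteq> 0 \<Longrightarrow> c j w \<noteq> 0 \<Longrightarrow> \<alpha> (s i) z = \<alpha> (s j) w \<Longrightarrow> i = j"
    and "\<And>z. (\<Sum>i\<in>I. (c i z)\<^sup>2 * f (\<alpha> (s i) z)) = max (f z - e) 0"
proof -
  obtain UU s where fin: "finite UU" and UU: "\<forall>U\<in>UU. open U" and cover: "{y. e \<le> f y} \<subseteq> \<Union>UU"
    and s_W: "\<forall>U\<in>UU. s U \<in> carrier G \<and> \<alpha> (s U) ` U \<subseteq> W"
    and disj: "\<forall>U\<in>UU. \<forall>V\<in>UU. U \<noteq> V \<longrightarrow> \<alpha> (s U) ` U \<inter> \<alpha> (s V) ` V = {}"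
    using sub unfolding subequiv_def by (elim exE conjE) (rule that)
  have s: "\<forall>U\<in>UU. s U \<in> carrier G" and large: "\<forall>U\<in>UU. \<forall>z\<in>U. e / 2 < f (\<alpha> (s U) z)"
    using s_W W by blast+
  obtain c where c: "\<And>U. U \<in> UU \<Longrightarrow> continuous_on UNIV (c U)"
    and supp: "\<And>U z. U \<in> UU \<Longrightarrow> c U z \<noteq> 0 \<Longrightarrow> z \<in> U"
    and sum: "\<And>z. (\<Sum>U\<in>UU. (c U z)\<^sup>2 * f (\<alpha> (s U) z)) = max (f z - e) 0"
    by (rule cover_weights[OF f e fin UU cover s large]) (rule that)
  show ?thesis
  proof (rule that[OF fin _ c _ _ sum])
    show "s U \<in> carrier G" if "U \<in> UU" for U using s that by blast
    show "\<alpha> (s U) z \<in> W" if "U \<in> UU" "c U z \<noteq> 0" for U z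
      using s_W supp that by blast
    show "U = V" if "U \<in> UU" "V \<in> UU" "c U z \<noteq> 0" "c V w \<noteq> 0" "\<alpha> (s U) z = \<alpha> (s V) w" for U V z w
      using supp[OF that(1,3)] supp[OF that(2,4)] disj that by blast
  qed
qed

lemma transport_pair_witness:
  fixes f g :: "'x \<Rightarrow> real"
  assumes I: "finite I" "\<And>i. i \<in> I \<Longrightarrow> s i \<in> carrier G" "\<And>i. i \<in> I \<Longrightarrow> continuous_on UNIV (c i)"
    and J: "finite J" "\<And>j. j \<in> J \<Longrightarrow> t j \<in> carrier G" "\<And>j. j \<in> J \<Longrightarrow> continuous_on UNIV (d j)"
    and c_A: "\<And>i z. i \<in> I \<Longrightarrow> c i z \<noteq> 0 \<Longrightarrow> \<alpha> (s i) z \<in> A"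
    and d_B: "\<And>j z. j \<in> J \<Longrightarrow> d j z \<noteq> 0 \<Longrightarrow> \<alpha> (t j) z \<in> B" and AB: "A \<inter> B = {}"
    and c_disj: "\<And>i j z w. i \<in> I \<Longrightarrow> j \<in> I \<Longrightarrow> c i z \<noteq> 0 \<Longrightarrow> c j w \<noteq> 0 \<Longrightarrow> \<alpha> (s i) z = \<alpha> (s j) w \<Longrightarrow> i = j"
    and d_disj: "\<And>i j z w. i \<in> J \<Longrightarrow> j \<in> J \<Longrightarrow> d i z \<noteq> 0 \<Longrightarrow> d j w \<noteq> 0 \<Longrightarrow> \<alpha> (t i) z = \<alpha> (t j) w \<Longrightarrow> i = j"
    and c_sum: "\<And>z. (\<Sum>i\<in>I. (c i z)\<^sup>2 * f (\<alpha> (s i) z)) = g z"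
    and d_sum: "\<And>z. (\<Sum>j\<in>J. (d j z)\<^sup>2 * f (\<alpha> (t j) z)) = g z"
    and near: "\<And>z. \<bar>g z - f z\<bar> \<le> e"
  shows "cuntz_diag2_witness G \<alpha> (mult_op G \<alpha> (\<lambda>x. complex_of_real (f x))) (mult_op G \<alpha> (\<lambda>x. complex_of_real (f x))) e
           (transport_op G \<alpha> I s c) (transport_op G \<alpha> J t d) (transport_adj G \<alpha> I s c) (transport_adj G \<alpha> J t d)"
proof -
  let ?f = "mult_op G \<alpha> (\<lambda>x. complex_of_real (f x))"
  have "transport_adj G \<alpha> I s c (?f (transport_op G \<alpha> I s c \<xi>)) = mult_op G \<alpha> (\<lambda>y. complex_of_real (g y)) \<xi>"
    and "transport_adj G \<alpha> J t d (?f (transport_op G \<alpha> J t d \<xi>)) = mult_op G \<alpha> (\<lambda>y. complex_of_real (g y)) \<xi>"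
    for \<xi>
    by (simp_all only: compression_disjoint[OF I(1,2) c_disj] compression_disjoint[OF J(1,2) d_disj]
                       c_sum d_sum)
  moreover have "transport_adj G \<alpha> I s c (?f (transport_op G \<alpha> J t d \<xi>)) = 0"
    and "transport_adj G \<alpha> J t d (?f (transport_op G \<alpha> I s c \<xi>)) = 0" for \<xi>
    using AB by (simp_all add: Int_commute compression_orthogonal[OF I(2) J(2) c_A d_B]
                               compression_orthogonal[OF J(2) I(2) d_B c_A])
  moreover have "0 \<le> e" using near order_trans abs_ge_zero by blast
  moreover have "l2norm (mult_op G \<alpha> (\<lambda>y. complex_of_real (g y - f y)) \<xi>) \<le> e * l2norm \<xi>"
    if "\<xi> \<in> l2 G" for \<xi>
  proof (rule l2norm_mult_op_le[OF that])
    show "cmod (complex_of_real (g y - f y)) \<le> e" for y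
      using near[of y] by (metis norm_of_real)
  qed
  ultimately have "m2_norm_le G (\<lambda>\<xi>. transport_adj G \<alpha> I s c (?f (transport_op G \<alpha> I s c \<xi>)) - ?f \<xi>)
      (\<lambda>\<xi>. transport_adj G \<alpha> I s c (?f (transport_op G \<alpha> J t d \<xi>)))
      (\<lambda>\<xi>. transport_adj G \<alpha> J t d (?f (transport_op G \<alpha> I s c \<xi>)))
      (\<lambda>\<xi>. transport_adj G \<alpha> J t d (?f (transport_op G \<alpha> J t d \<xi>)) - ?f \<xi>) e"
    by (intro m2_norm_le_diagonal[where D = "mult_op G \<alpha> (\<lambda>y. complex_of_real (g y - f y))"])
       (simp_all add: mult_op_diff)
  then show ?thesis
    unfolding cuntz_diag2_witness_def using I J compact_UNIV
    by (auto intro!: transport_op_in_crossed_product is_adjoint_transport)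
qed

lemma paradoxical_cuntz_witness:
  fixes f :: "'x \<Rightarrow> real"
  assumes pc: "paradoxical_comparison G \<alpha>" and f: "continuous_on UNIV f" "\<And>x. 0 \<le> f x"
    and e: "0 < e" and large: "e / 2 < f z"
  shows "\<exists>r1 r2 r1' r2'. cuntz_diag2_witness G \<alpha> (mult_op G \<alpha> (\<lambda>x. complex_of_real (f x)))
                           (mult_op G \<alpha> (\<lambda>x. complex_of_real (f x))) e r1 r2 r1' r2'"
proof -
  define F W where "F = {y. e \<le> f y}" and "W = {y. e / 2 < f y}"
  have "open W" unfolding W_def using f(1) by (intro open_Collect_less continuous_on_const)
  moreover have "closed F" unfolding F_def using f(1) by (intro closed_Collect_le continuous_on_const)
  moreover have "W \<noteq> {}" "F \<subseteq> W" using large e by (auto simp: F_def W_def)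
  ultimately obtain O1 O2 where O: "O1 \<subseteq> W" "O2 \<subseteq> W" "O1 \<inter> O2 = {}"
    and sub: "subequiv G \<alpha> F O1" "subequiv G \<alpha> F O2"
    using pc unfolding paradoxical_comparison_def by metis
  obtain I :: "'x set set" and s c
    where I: "finite I" "\<And>i. i \<in> I \<Longrightarrow> s i \<in> carrier G" "\<And>i. i \<in> I \<Longrightarrow> continuous_on UNIV (c i)"
    and c_O1: "\<And>i z. i \<in> I \<Longrightarrow> c i z \<noteq> 0 \<Longrightarrow> \<alpha> (s i) z \<in> O1"
    and c_disj: "\<And>i j z w. i \<in> I \<Longrightarrow> j \<in> I \<Longrightarrow> c i z \<noteq> 0 \<Longrightarrow> c j w \<noteq> 0 \<Longrightarrow> \<alpha> (s i) z = \<alpha> (s j) w \<Longrightarrow> i = j"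
    and c_sum: "\<And>z. (\<Sum>i\<in>I. (c i z)\<^sup>2 * f (\<alpha> (s i) z)) = max (f z - e) 0"
    by (rule subequiv_weights[OF f(1) e sub(1)[unfolded F_def] O(1)[unfolded W_def]]) (rule that)
  obtain J :: "'x set set" and t d
    where J: "finite J" "\<And>j. j \<in> J \<Longrightarrow> t j \<in> carrier G" "\<And>j. j \<in> J \<Longrightarrow> continuous_on UNIV (d j)"
    and d_O2: "\<And>j z. j \<in> J \<Longrightarrow> d j z \<noteq> 0 \<Longrightarrow> \<alpha> (t j) z \<in> O2"
    and d_disj: "\<And>i j z w. i \<in> J \<Longrightarrow> j \<in> J \<Longrightarrow> d i z \<noteq> 0 \<Longrightarrow> d j w \<noteq> 0 \<Longrightarrow> \<alpha> (t i) z = \<alpha> (t j) w \<Longrightarrow> i = j"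
    and d_sum: "\<And>z. (\<Sum>j\<in>J. (d j z)\<^sup>2 * f (\<alpha> (t j) z)) = max (f z - e) 0"
    by (rule subequiv_weights[OF f(1) e sub(2)[unfolded F_def] O(2)[unfolded W_def]]) (rule that)
  have near: "\<bar>max (f y - e) 0 - f y\<bar> \<le> e" for y
    using f(2)[of y] e by (simp add: abs_if max_def)
  have "cuntz_diag2_witness G \<alpha> (mult_op G \<alpha> (\<lambda>x. complex_of_real (f x)))
          (mult_op G \<alpha> (\<lambda>x. complex_of_real (f x))) e (transport_op G \<alpha> I s c) (transport_op G \<alpha> J t d)
          (transport_adj G \<alpha> I s c) (transport_adj G \<alpha> J t d)"
    by (rule transport_pair_witness[where A = O1 and B = O2])
       (fact I J c_O1 d_O2 O(3) c_disj d_disj c_sum d_sum near)+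
  then show ?thesis by blast
qed

end

theorem proposition4p9:
  fixes G :: "('g, 'b) monoid_scheme" and \<alpha> :: "'g \<Rightarrow> 'x::t2_space \<Rightarrow> 'x"
  assumes "group G" and "countable (carrier G)" and "infinite (carrier G)"
    and "compact (UNIV :: 'x set)" and "infinite (UNIV :: 'x set)"
    and "group_action G \<alpha>" and "paradoxical_comparison G \<alpha>"
  shows "\<forall>f :: 'x \<Rightarrow> real. continuous_on UNIV f \<and> (\<forall>x. 0 \<le> f x) \<and> f \<noteq> (\<lambda>_. 0) \<longrightarrow>
           cuntz_diag2_below G \<alpha> (mult_op G \<alpha> (\<lambda>x. complex_of_real (f x)))
                                 (mult_op G \<alpha> (\<lambda>x. complex_of_real (f x)))"
proof (intro allI impI, elim conjE)
  fix f :: "'x \<Rightarrow> real"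
  assume f: "continuous_on UNIV f" "\<forall>x. 0 \<le> f x" "f \<noteq> (\<lambda>_. 0)"
  interpret compact_group_action G \<alpha>
    using assms by (simp add: compact_group_action_def compact_group_action_axioms_def
                              continuous_group_action_def continuous_group_action_axioms_def)
  obtain x0 where x0: "0 < f x0"
    using f(2,3) by (metis less_eq_real_def)
  then show "cuntz_diag2_below G \<alpha> (mult_op G \<alpha> (\<lambda>x. complex_of_real (f x)))
                                  (mult_op G \<alpha> (\<lambda>x. complex_of_real (f x)))"
    by (rule cuntz_diag2_belowI)
       (use f x0 in \<open>auto intro!: paradoxical_cuntz_witness[where z = x0, OF assms(7)]\<close>)
qed

end
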